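(* Let $n\ge4$. The set $\mathbb{CPI}^n_S$ of closed path independent graphs in $\mathbb G^n_S$ is an $n$-dimensional linear subspace of $\mathbb G^n_S\cong\mathbb R^{\binom n2}$, and $\{\mathbf B^n_j\}_{j=1}^n$ is a basis of it, where $\mathbf B^n_j$ is the vector with $d_{j,k}=1$ for all $k\ne j$ and all other entries $0$.
   Context: $\mathbb G^n_S$ is the space of complete undirected weighted graphs without loops on $V_1,\dots,V_n$ with edge weights $d_{i,j}=d_{j,i}$, identified with $\mathbb R^{\binom n2}$ via the entries $d_{i,j}$, $i<j$. A closed path through a set $D$ ($|D|\ge3$) is a closed path visiting each $V_j$, $j\in D$, exactly once and no other vertex; its length is the sum of its edge weights. A graph is closed path independent iff for every such $D$ all closed paths through $D$ have the same length. *)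

theory Defs
  imports "HOL-Analysis.Analysis"
begin

text \<open>Vertices V_1..V_n are the elements of a finite type 'n with CARD('n) = n.
A weighted graph is a matrix d :: real^'n^'n; the space G^n_S consists of the
symmetric matrices with zero diagonal (diagonal = no loops), a linear space
isomorphic to R^(n choose 2) via the entries d_{i,j}, i<j.\<close>

definition graph_space :: "(real^'n^'n) set" where
  "graph_space = {d. (\<forall>i j. d$i$j = d$j$i) \<and> (\<forall>i. d$i$i = 0)}"

text \<open>A closed path through D: cyclic sequence of the distinct vertices of D,
each visited exactly once; given as a list p with V_{p!0} -> ... -> V_{p!(k-1)} -> V_{p!0}.\<close>

definition closed_path_through :: "'n set \<Rightarrow> 'n list \<Rightarrow> bool" where
  "closed_path_through D p \<longleftrightarrow> distinct p \<and> set p = D"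

definition closed_path_length :: "real^'n^'n \<Rightarrow> 'n list \<Rightarrow> real" where
  "closed_path_length d p =
     (\<Sum>i<length p. d $ (p ! i) $ (p ! ((i + 1) mod length p)))"

definition closed_path_independent :: "real^'n^'n \<Rightarrow> bool" where
  "closed_path_independent d \<longleftrightarrow>
     (\<forall>D p q. card D \<ge> 3 \<and> closed_path_through D p \<and> closed_path_through D q
        \<longrightarrow> closed_path_length d p = closed_path_length d q)"

definition CPI :: "(real^'n^'n) set" where
  "CPI = {d \<in> graph_space. closed_path_independent d}"

definition Bvec :: "'n \<Rightarrow> real^'n^'n" where
  "Bvec j = (\<chi> i k. if i \<noteq> k \<and> (i = j \<or> k = j) then 1 else 0)"

end

theory Submission
  imports Defs
begin

text \<open>For weights \<open>c\<close> on the vertices, the graph with \<open>d\<^sub>i\<^sub>k = c\<^sub>i + c\<^sub>k\<close> is closed path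
independent: in a closed path through \<open>D\<close> every vertex lies on exactly two edges, so the
length is \<open>2 \<Sum>\<^sub>j\<^sub>\<in>\<^sub>D c\<^sub>j\<close>. Conversely, comparing the 4-cycles \<open>a b c e\<close> and \<open>a c b e\<close> shows
\<open>d\<^sub>a\<^sub>b + d\<^sub>c\<^sub>e = d\<^sub>a\<^sub>c + d\<^sub>b\<^sub>e\<close> for a closed path independent \<open>d\<close>. Hence the Gromov product
\<open>(j|k)\<^sub>i = (d\<^sub>i\<^sub>j + d\<^sub>i\<^sub>k - d\<^sub>j\<^sub>k)/2\<close> does not depend on the distinct \<open>j, k \<noteq> i\<close>, and with
\<open>c\<^sub>i\<close> this common value one gets \<open>d\<^sub>i\<^sub>l = c\<^sub>i + c\<^sub>l\<close>. So the closed path independent graphs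
are the image of the injective linear map \<open>c \<mapsto> (c\<^sub>i + c\<^sub>k)\<close>, which sends the standard
basis vectors to the \<open>B\<^sub>j\<close>.\<close>

definition vertex_sum_graph :: "real^'n \<Rightarrow> real^'n^'n" where
  "vertex_sum_graph c = (\<chi> i k. if i = k then 0 else c$i + c$k)"

lemma linear_vertex_sum_graph: "linear vertex_sum_graph"
  by (rule linearI) (auto simp: vertex_sum_graph_def vec_eq_iff algebra_simps)

lemma Bvec_eq_vertex_sum_graph_axis: "Bvec j = vertex_sum_graph (axis j 1)"
  by (auto simp: Bvec_def vertex_sum_graph_def axis_def vec_eq_iff)

lemma Basis_real_vec: "(Basis :: (real^'n) set) = range (\<lambda>j. axis j 1)"
  by (auto simp: Basis_vec_def)

lemma range_Bvec: "range Bvec = vertex_sum_graph ` Basis"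
  by (simp add: Basis_real_vec Bvec_eq_vertex_sum_graph_axis image_image)

lemma vertex_sum_graph_in_graph_space: "vertex_sum_graph c \<in> graph_space"
  by (simp add: graph_space_def vertex_sum_graph_def add.commute)

lemma sum_lessThan_rotate:
  fixes f :: "nat \<Rightarrow> 'a::comm_monoid_add"
  shows "(\<Sum>i<L. f (Suc i mod L)) = (\<Sum>i<L. f i)"
proof (cases L)
  case (Suc m)
  have "(\<Sum>i<Suc m. f (Suc i mod Suc m)) = (\<Sum>i<m. f (Suc i)) + f 0"
    by simp
  also have "\<dots> = (\<Sum>i<Suc m. f i)"
    by (simp only: sum.lessThan_Suc_shift add.commute)
  finally show ?thesis using Suc by simp
qed simp

lemma closed_path_length_vertex_sum_graph:
  assumes "distinct p" "2 \<le> length p"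
  shows "closed_path_length (vertex_sum_graph c) p = 2 * (\<Sum>j\<in>set p. c$j)"
proof -
  let ?L = "length p"
  have next_ne: "p ! i \<noteq> p ! (Suc i mod ?L)" if "i < ?L" for i
  proof -
    have "Suc i mod ?L \<noteq> i" "Suc i mod ?L < ?L"
      using that assms(2) by (auto simp: mod_Suc)
    then show ?thesis using assms(1) that by (simp add: nth_eq_iff_index_eq)
  qed
  have "closed_path_length (vertex_sum_graph c) p
      = (\<Sum>i<?L. c$(p ! i)) + (\<Sum>i<?L. c$(p ! (Suc i mod ?L)))"
    unfolding closed_path_length_def vertex_sum_graph_def sum.distrib[symmetric]
    using next_ne by (intro sum.cong) auto
  also have "\<dots> = 2 * (\<Sum>i<?L. c$(p ! i))"
    by (simp add: sum_lessThan_rotate[of "\<lambda>i. c$(p ! i)"])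
  also have "(\<Sum>i<?L. c$(p ! i)) = (\<Sum>j\<in>set p. c$j)"
    using assms(1) by (simp add: sum.distinct_set_conv_list sum_list_sum_nth atLeast0LessThan)
  finally show ?thesis .
qed

lemma vertex_sum_graph_in_CPI: "vertex_sum_graph c \<in> CPI"
proof -
  have "closed_path_length (vertex_sum_graph c) p = 2 * (\<Sum>j\<in>D. c$j)"
    if "closed_path_through D p" "3 \<le> card D" for D p
  proof -
    have p: "distinct p" "set p = D"
      using that(1) by (simp_all add: closed_path_through_def)
    then have "2 \<le> length p"
      using that(2) distinct_card by fastforce
    with p show ?thesis
      by (simp add: closed_path_length_vertex_sum_graph)
  qed
  then have "closed_path_independent (vertex_sum_graph c)"
    unfolding closed_path_independent_def by auto
  then show ?thesis
    by (simp add: CPI_def vertex_sum_graph_in_graph_space)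
qed

lemma ex_third_vertex:
  assumes "3 \<le> CARD('n::finite)"
  shows "\<exists>k::'n. k \<noteq> i \<and> k \<noteq> j"
proof (rule ccontr)
  assume "\<not> ?thesis"
  then have "CARD('n) \<le> card {i, j}"
    by (intro card_mono) auto
  also have "\<dots> \<le> 2"
    by (simp add: card_insert_if)
  finally show False using assms by simp
qed

lemma ex_distinct_triple:
  assumes "3 \<le> CARD('n::finite)"
  shows "\<exists>j k::'n. distinct [i, j, k]"
proof -
  obtain j where "j \<noteq> i" using ex_third_vertex[OF assms, of i i] by blast
  moreover obtain k where "k \<noteq> i" "k \<noteq> j" using ex_third_vertex[OF assms, of i j] by blast
  ultimately show ?thesis by auto
qed

lemma inj_vertex_sum_graph:
  assumes "3 \<le> CARD('n::finite)"
  shows "inj (vertex_sum_graph :: real^'n \<Rightarrow> real^'n^'n)"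
  unfolding linear_inj_iff_eq_0[OF linear_vertex_sum_graph]
proof (intro allI impI)
  fix c :: "real^'n"
  assume zero: "vertex_sum_graph c = 0"
  have "c$i = 0" for i
  proof -
    obtain j k where "distinct [i, j, k]" using ex_distinct_triple[OF assms] by blast
    have "vertex_sum_graph c $ i $ j = 0" "vertex_sum_graph c $ i $ k = 0"
      "vertex_sum_graph c $ j $ k = 0"
      using zero by simp_all
    then have "c$i + c$j = 0" "c$i + c$k = 0" "c$j + c$k = 0"
      using \<open>distinct [i, j, k]\<close> by (auto simp: vertex_sum_graph_def)
    then show ?thesis by simp
  qed
  then show "c = 0" by (simp add: vec_eq_iff)
qed

lemma CPI_four_point:
  assumes "d \<in> CPI" "distinct [a, b, c, e]"
  shows "d$a$b + d$c$e = d$a$c + d$b$e"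
proof -
  have "closed_path_through {a, b, c, e} [a, b, c, e]" "closed_path_through {a, b, c, e} [a, c, b, e]"
    "3 \<le> card {a, b, c, e}"
    using assms(2) by (auto simp: closed_path_through_def)
  then have "closed_path_length d [a, b, c, e] = closed_path_length d [a, c, b, e]"
    using assms(1) unfolding CPI_def closed_path_independent_def by blast
  moreover have "{..<4::nat} = {0, 1, 2, 3}" by auto
  moreover have "d$c$b = d$b$c" using assms(1) by (simp add: CPI_def graph_space_def)
  ultimately show ?thesis by (simp add: closed_path_length_def)
qed

definition gromov_product :: "real^'n^'n \<Rightarrow> 'n \<Rightarrow> 'n \<Rightarrow> 'n \<Rightarrow> real" where
  "gromov_product d i j k = (d$i$j + d$i$k - d$j$k) / 2"

lemma gromov_product_commute:
  "d \<in> graph_space \<Longrightarrow> gromov_product d i j k = gromov_product d i k j"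
  by (simp add: gromov_product_def graph_space_def)

lemma CPI_gromov_product_shift:
  assumes "d \<in> CPI" "distinct [i, j, k]" "k' \<noteq> i" "k' \<noteq> j"
  shows "gromov_product d i j k = gromov_product d i j k'"
proof (cases "k' = k")
  case False
  have "d$i$k + d$k'$j = d$i$k' + d$k$j"
    using CPI_four_point[OF assms(1), of i k k' j] assms False by auto
  moreover have "d$k'$j = d$j$k'" "d$k$j = d$j$k"
    using assms(1) by (simp_all add: CPI_def graph_space_def)
  ultimately show ?thesis by (simp add: gromov_product_def)
qed simp

lemma CPI_gromov_product_independent:
  assumes d: "d \<in> CPI" and "distinct [i, j, k]" "distinct [i, j', k']"
  shows "gromov_product d i j k = gromov_product d i j' k'"
proof (cases "j' = j")
  case True
  then show ?thesis using CPI_gromov_product_shift[OF d] assms by auto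
next
  case False
  have "gromov_product d i j k = gromov_product d i j j'"
    using CPI_gromov_product_shift[OF d] assms False by auto
  also have "\<dots> = gromov_product d i j' j"
    using d by (simp add: CPI_def gromov_product_commute)
  also have "\<dots> = gromov_product d i j' k'"
    using CPI_gromov_product_shift[OF d] assms False by auto
  finally show ?thesis .
qed

lemma CPI_eq_range_vertex_sum_graph:
  assumes "3 \<le> CARD('n::finite)"
  shows "(CPI :: (real^'n^'n) set) = range vertex_sum_graph"
proof
  show "range vertex_sum_graph \<subseteq> (CPI :: (real^'n^'n) set)"
    using vertex_sum_graph_in_CPI by blast
next
  show "CPI \<subseteq> range (vertex_sum_graph :: real^'n \<Rightarrow> _)"
  proof
    fix d :: "real^'n^'n"
    assume d: "d \<in> CPI"
    obtain J K :: "'n \<Rightarrow> 'n" where JK: "\<And>i. distinct [i, J i, K i]"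
      using ex_distinct_triple[OF assms] by metis
    define c :: "real^'n" where "c = (\<chi> i. gromov_product d i (J i) (K i))"
    have "d$i$l = c$i + c$l" if "i \<noteq> l" for i l
    proof -
      obtain k where k: "k \<noteq> i" "k \<noteq> l" using ex_third_vertex[OF assms] by blast
      have "c$i = gromov_product d i l k" "c$l = gromov_product d l i k"
        using CPI_gromov_product_independent[OF d JK] k that by (auto simp: c_def)
      moreover have "d$l$i = d$i$l" "d$l$k = d$k$l"
        using d by (simp_all add: CPI_def graph_space_def)
      ultimately show ?thesis by (simp add: gromov_product_def field_simps)
    qed
    moreover have "d$i$i = 0" for i
      using d by (simp add: CPI_def graph_space_def)
    ultimately have "d = vertex_sum_graph c"
      by (simp add: vertex_sum_graph_def vec_eq_iff)
    then show "d \<in> range vertex_sum_graph" by blast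
  qed
qed

theorem theorem9:
  assumes "CARD('n::finite) \<ge> 4"
  shows "subspace (CPI :: (real^'n^'n) set) \<and> CPI \<subseteq> (graph_space :: (real^'n^'n) set)
         \<and> dim (CPI :: (real^'n^'n) set) = CARD('n)
         \<and> inj (Bvec :: 'n \<Rightarrow> real^'n^'n)
         \<and> independent (range (Bvec :: 'n \<Rightarrow> real^'n^'n))
         \<and> span (range (Bvec :: 'n \<Rightarrow> real^'n^'n)) = CPI"
proof -
  have n3: "3 \<le> CARD('n)" using assms by simp
  note lin = linear_vertex_sum_graph and inj = inj_vertex_sum_graph[OF n3]
  have span: "span (range Bvec) = (CPI :: (real^'n^'n) set)"
    by (simp add: range_Bvec span_linear_image[OF lin] CPI_eq_range_vertex_sum_graph[OF n3])
  have "subspace (CPI :: (real^'n^'n) set)"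
    by (metis span subspace_span)
  moreover have "CPI \<subseteq> (graph_space :: (real^'n^'n) set)"
    by (auto simp: CPI_def)
  moreover have "dim (CPI :: (real^'n^'n) set) = CARD('n)"
    using dim_image_eq[OF lin inj_on_subset[OF inj]]
    by (simp add: CPI_eq_range_vertex_sum_graph[OF n3])
  moreover have "inj (Bvec :: 'n \<Rightarrow> real^'n^'n)"
    using inj by (auto intro!: injI simp: Bvec_eq_vertex_sum_graph_axis inj_eq axis_eq_axis)
  moreover have "independent (range (Bvec :: 'n \<Rightarrow> real^'n^'n))"
    unfolding range_Bvec
    by (rule linear_independent_injective_image[OF lin independent_Basis inj_on_subset[OF inj]]) simp
  ultimately show ?thesis
    using span by blast
qed

end
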